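(* For a glass relaxing isothermally at fixed medium temperature $T_0$ and pressure $P_0$, with $T_0<T_{0\text{g}}$ and $S>S_{\text{SCL}}$, the enthalpy satisfies $H(T_0,P_0,t)>H_{\text{SCL}}(T_0,P_0)$.
   Context: The system is in contact with a large equilibrium medium at fixed $T_0,P_0$ and is in internal equilibrium with instantaneous temperature $T(t)$ defined by $1/T=\partial S/\partial E$, where $S(E,V,\boldsymbol{\xi})$ is the entropy as a function of energy, volume and internal variables. Below $T_{0\text{g}}$ the system is out of equilibrium with the medium, and during relaxation $T(t)>T_0$, with $T(t)\to T_0$ from above. The enthalpy is $H=E+P_0V$, and for an isobaric process $dH=d_{\text{e}}Q=T_0\,d_{\text{e}}S$, where $d_{\text{e}}Q$, $d_{\text{e}}S$ are the heat and entropy exchanged with the medium. The second law gives $[T_0-T(t)]d_{\text{e}}S(t)\ge0$. $H_{\text{SCL}}(T_0,P_0)$ and $S_{\text{SCL}}$ are the enthalpy and entropy of the equilibrium supercooled liquid at $T_0,P_0$; $T_{0\text{g}}$ is the temperature below which the system falls out of equilibrium on the observation time scale. *)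

theory Defs
  imports Complex_Main
begin

end

theory Submission
  imports Defs
begin

text \<open>The Gibbs free energy \<open>G = H - T\<^sub>0 S\<close> of the system at the medium temperature
  changes at the rate \<open>dH/dt - T\<^sub>0 dS/dt = -T\<^sub>0 d\<^sub>iS/dt \<le> 0\<close>, so it decreases towards
  its supercooled-liquid limit \<open>H\<^sub>S\<^sub>C\<^sub>L - T\<^sub>0 S\<^sub>S\<^sub>C\<^sub>L\<close>.  Hence
  \<open>H(t) - H\<^sub>S\<^sub>C\<^sub>L \<ge> T\<^sub>0 (S(t) - S\<^sub>S\<^sub>C\<^sub>L) > 0\<close>.  Only \<open>d\<^sub>iS \<ge> 0\<close> enters.\<close>

lemma antitone_on_atLeast_if_deriv_nonpos:
  fixes f f' :: "real \<Rightarrow> real"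
  assumes deriv: "\<And>x. x \<ge> a \<Longrightarrow> (f has_real_derivative f' x) (at x within {a..})"
    and nonpos: "\<And>x. x \<ge> a \<Longrightarrow> f' x \<le> 0"
    and "a \<le> s" "s \<le> t"
  shows "f t \<le> f s"
proof (rule DERIV_nonpos_imp_decreasing_open[OF \<open>s \<le> t\<close>])
  fix x assume "s < x" "x < t"
  with \<open>a \<le> s\<close> have "x \<in> {a<..}" by simp
  have "(f has_real_derivative f' x) (at x within {a<..})"
    using \<open>x \<in> {a<..}\<close> by (intro DERIV_subset[OF deriv]) auto
  then have "(f has_real_derivative f' x) (at x)"
    using at_within_open[OF \<open>x \<in> {a<..}\<close>] by simp
  with nonpos \<open>x \<in> {a<..}\<close> show "\<exists>y. DERIV f x :> y \<and> y \<le> 0" by force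
next
  have "continuous_on {a..} f"
    using DERIV_continuous[OF deriv] by (auto simp: continuous_on_eq_continuous_within)
  then show "continuous_on {s..t} f"
    by (rule continuous_on_subset) (use \<open>a \<le> s\<close> in auto)
qed

lemma tendsto_at_top_le_if_dominates_tail:
  fixes f :: "real \<Rightarrow> real"
  assumes "(f \<longlongrightarrow> L) at_top"
    and "\<And>s. s \<ge> x \<Longrightarrow> f s \<le> f x"
  shows "L \<le> f x"
proof (rule tendsto_upperbound[OF assms(1)])
  show "eventually (\<lambda>s. f s \<le> f x) at_top"
    using assms(2) by (auto simp: eventually_at_top_linorder)
qed simp

lemma has_real_derivative_free_energy:
  fixes H S :: "real \<Rightarrow> real"
  assumes "(H has_real_derivative T0 * deS) (at x within A)"
    and "(S has_real_derivative deS + diS) (at x within A)"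
  shows "((\<lambda>u. H u - T0 * S u) has_real_derivative - (T0 * diS)) (at x within A)"
proof -
  have "((\<lambda>u. H u - T0 * S u) has_real_derivative T0 * deS - T0 * (deS + diS)) (at x within A)"
    by (rule DERIV_diff[OF assms(1) DERIV_cmult[OF assms(2)]])
  then show ?thesis by (simp add: algebra_simps)
qed

theorem theorem4:
  fixes T0 P0 T0g H_SCL S_SCL :: real
    and H S T deS diS :: "real \<Rightarrow> real"
    and t :: real
  assumes T0_pos: "T0 > 0"
    and below_glass: "T0 < T0g"
    and hot: "\<forall>u\<ge>0. T u > T0"
    and T_lim: "(T \<longlongrightarrow> T0) at_top"
    and dH: "\<forall>u\<ge>0. (H has_real_derivative T0 * deS u) (at u within {0..})"
    and dS: "\<forall>u\<ge>0. (S has_real_derivative deS u + diS u) (at u within {0..})"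
    and second_law_i: "\<forall>u\<ge>0. diS u \<ge> 0"
    and second_law_e: "\<forall>u\<ge>0. (T0 - T u) * deS u \<ge> 0"
    and H_lim: "(H \<longlongrightarrow> H_SCL) at_top"
    and S_lim: "(S \<longlongrightarrow> S_SCL) at_top"
    and t_nonneg: "t \<ge> 0"
    and S_gt: "S t > S_SCL"
  shows "H t > H_SCL"
proof -
  define G where "G u = H u - T0 * S u" for u
  have G_decreasing: "G s \<le> G t" if "s \<ge> t" for s
  proof (rule antitone_on_atLeast_if_deriv_nonpos[OF _ _ t_nonneg that])
    show "(G has_real_derivative - (T0 * diS x)) (at x within {0..})" if "x \<ge> 0" for x
      unfolding G_def[abs_def] using dH dS that by (intro has_real_derivative_free_energy) auto
    show "- (T0 * diS x) \<le> 0" if "x \<ge> 0" for x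
      using second_law_i T0_pos that by simp
  qed
  have "(G \<longlongrightarrow> H_SCL - T0 * S_SCL) at_top"
    unfolding G_def[abs_def] by (intro tendsto_diff tendsto_mult_left H_lim S_lim)
  then have "H_SCL - T0 * S_SCL \<le> G t"
    using G_decreasing by (rule tendsto_at_top_le_if_dominates_tail)
  moreover have "T0 * (S t - S_SCL) > 0" using T0_pos S_gt by simp
  ultimately show ?thesis unfolding G_def by (simp add: algebra_simps)
qed

end
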